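(* Let $A$ be a torsion-free $\mathbb{Z}_{(p)}$-algebra and $F$ a formal group law over $A$. Then $F$ is $p^n$-typical if and only if its logarithm has the form $\sum_{i\ge0}l_ix^{p^{ni}}$ with $l_i\in A\otimes\mathbb{Q}$.
   Context: A formal group law $F$ over a $\mathbb{Z}_{(p)}$-algebra is $p$-typical in the sense of Cartier (over a torsion-free $\mathbb{Z}_{(p)}$-algebra, this is equivalent to its logarithm having the form $\sum_{i\ge0}l_ix^{p^i}$). A power series in $x$ is $p^n$-gradable if it has the form $\sum_{j\ge0}a_jx^{1+j(p^n-1)}$. $F$ is $p^n$-typical if it is $p$-typical and the series $[p]_F(x)$ ($p$-fold formal sum of $x$) is $p^n$-gradable. *)

theory Defs
  imports "HOL-Computational_Algebra.Formal_Power_Series"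
begin

(* Bivariate power series over a ring are represented as 'a fps fps.
   The coefficient of x^i y^j of F is  fps_nth (fps_nth F i) j  (outer index = x-degree).
   The product in 'a fps fps is exactly the product of bivariate power series. *)

definition c2 :: "'a fps fps \<Rightarrow> nat \<Rightarrow> nat \<Rightarrow> 'a" where
  "c2 F i j = fps_nth (fps_nth F i) j"

definition map_ps2 :: "('a \<Rightarrow> 'b) \<Rightarrow> 'a fps fps \<Rightarrow> 'b fps fps" where
  "map_ps2 \<phi> F = Abs_fps (\<lambda>i. Abs_fps (\<lambda>j. \<phi> (fps_nth (fps_nth F i) j)))"

(* Associativity is written coefficientwise: since F has zero constant term,
   [x^i y^j z^k] F(F(x,y),z) = sum_{a <= i+j} [x^a z^k]F * [x^i y^j] F^a, and
   [x^i y^j z^k] F(x,F(y,z)) = sum_{b <= j+k} [x^i y^b]F * [y^j z^k] F^b. *)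
definition formal_group_law :: "'a::comm_ring_1 fps fps \<Rightarrow> bool" where
  "formal_group_law F \<longleftrightarrow>
     (\<forall>i. c2 F i 0 = (if i = 1 then 1 else 0)) \<and>
     (\<forall>j. c2 F 0 j = (if j = 1 then 1 else 0)) \<and>
     (\<forall>i j. c2 F i j = c2 F j i) \<and>
     (\<forall>i j k. (\<Sum>a\<le>i+j. c2 F a k * c2 (F ^ a) i j)
             = (\<Sum>b\<le>j+k. c2 F i b * c2 (F ^ b) j k))"

(* Formal sum F(g(x), h(x)) of two one-variable series with zero constant term:
   [x^m] F(g,h) = sum_{i,j <= m} [x^i y^j]F * [x^m](g^i h^j). *)
definition fgl_add :: "'a::comm_ring_1 fps fps \<Rightarrow> 'a fps \<Rightarrow> 'a fps \<Rightarrow> 'a fps" where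
  "fgl_add F g h = Abs_fps (\<lambda>m. \<Sum>i\<le>m. \<Sum>j\<le>m. c2 F i j * fps_nth (g ^ i * h ^ j) m)"

fun fgl_mult :: "'a::comm_ring_1 fps fps \<Rightarrow> nat \<Rightarrow> 'a fps" where
  "fgl_mult F 0 = 0"
| "fgl_mult F (Suc m) = fgl_add F (fgl_mult F m) fps_X"

definition Zp_algebra :: "nat \<Rightarrow> 'a::comm_ring_1 itself \<Rightarrow> bool" where
  "Zp_algebra p _ \<longleftrightarrow> (\<forall>m::nat. coprime m p \<longrightarrow> (\<exists>u::'a. of_nat m * u = 1))"

definition torsion_free :: "'a::comm_ring_1 itself \<Rightarrow> bool" where
  "torsion_free _ \<longleftrightarrow> (\<forall>(m::nat) (a::'a). m \<noteq> 0 \<longrightarrow> of_nat m * a = 0 \<longrightarrow> a = 0)"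

(* phi : A -> B exhibits B as A \<otimes> Q: phi is an injective ring homomorphism,
   every nonzero integer is invertible in B, and every element of B is phi(a)/m. *)
definition is_rationalization :: "('a::comm_ring_1 \<Rightarrow> 'b::comm_ring_1) \<Rightarrow> bool" where
  "is_rationalization \<phi> \<longleftrightarrow>
     \<phi> 1 = 1 \<and> (\<forall>a b. \<phi> (a + b) = \<phi> a + \<phi> b) \<and> (\<forall>a b. \<phi> (a * b) = \<phi> a * \<phi> b) \<and>
     inj \<phi> \<and>
     (\<forall>m::nat. m \<noteq> 0 \<longrightarrow> (\<exists>u::'b. of_nat m * u = 1)) \<and>
     (\<forall>b::'b. \<exists>(a::'a) (m::nat). m \<noteq> 0 \<and> of_nat m * b = \<phi> a)"

(* l in (A\<otimes>Q)[[x]] is the logarithm of F: l(x) = x + ..., l(F(x,y)) = l(x) + l(y).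
   Coefficientwise: [x^i y^j] l(F(x,y)) = sum_{k <= i+j} l_k [x^i y^j] F^k. *)
definition fgl_log :: "('a::comm_ring_1 \<Rightarrow> 'b::comm_ring_1) \<Rightarrow> 'a fps fps \<Rightarrow> 'b fps \<Rightarrow> bool" where
  "fgl_log \<phi> F l \<longleftrightarrow> fps_nth l 0 = 0 \<and> fps_nth l 1 = 1 \<and>
     (\<forall>i j. (\<Sum>k\<le>i+j. fps_nth l k * c2 (map_ps2 \<phi> F ^ k) i j)
            = (if j = 0 then fps_nth l i else 0) + (if i = 0 then fps_nth l j else 0))"

(* p-typical (Cartier); over a torsion-free Z_(p)-algebra characterized by the
   logarithm having the form sum_i l_i x^(p^i) (as stated in the paper's context). *)
definition p_typical :: "nat \<Rightarrow> ('a::comm_ring_1 \<Rightarrow> 'b::comm_ring_1) \<Rightarrow> 'a fps fps \<Rightarrow> bool" where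
  "p_typical p \<phi> F \<longleftrightarrow> (\<exists>l. fgl_log \<phi> F l \<and> (\<forall>k. fps_nth l k \<noteq> 0 \<longrightarrow> (\<exists>i. k = p ^ i)))"

definition gradable :: "nat \<Rightarrow> 'a::zero fps \<Rightarrow> bool" where
  "gradable q f \<longleftrightarrow> (\<forall>k. fps_nth f k \<noteq> 0 \<longrightarrow> (\<exists>j. k = 1 + j * (q - 1)))"

definition pn_typical :: "nat \<Rightarrow> nat \<Rightarrow> ('a::comm_ring_1 \<Rightarrow> 'b::comm_ring_1) \<Rightarrow> 'a fps fps \<Rightarrow> bool" where
  "pn_typical p n \<phi> F \<longleftrightarrow> p_typical p \<phi> F \<and> gradable (p ^ n) (fgl_mult F p)"

end

theory Submission
  imports Defs
begin

(* Write M = [p]_F(x), read in B = A \<otimes> Q. Since l(F(x,y)) = l(x) + l(y), the logarithm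
   solves Schroeder's equation l(M(x)) = p l(x), and M has linear coefficient p. Comparing
   coefficients of x^m gives (p^m - p) l_m = - \<Sum>_{k<m} l_k [x^m] M^k, so l is determined
   by M (in particular it is unique), and with d = p^n - 1 an induction on m shows that l
   is supported on exponents congruent to 1 mod d iff M is: the power M^k is supported on
   exponents congruent to k. Finally p^i is congruent to 1 mod p^n - 1 iff n divides i.
   Everything happens in B. *)

unbundle fps_syntax

locale comm_ring_hom =
  fixes \<phi> :: "'a::comm_ring_1 \<Rightarrow> 'b::comm_ring_1"
  assumes map_one: "\<phi> 1 = 1"
    and map_add: "\<phi> (a + b) = \<phi> a + \<phi> b"
    and map_mult: "\<phi> (a * b) = \<phi> a * \<phi> b"

definition fps_map :: "('a \<Rightarrow> 'b) \<Rightarrow> 'a fps \<Rightarrow> 'b fps" where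
  "fps_map \<phi> f = Abs_fps (\<lambda>n. \<phi> (f $ n))"

lemma fps_map_nth [simp]: "fps_map \<phi> f $ n = \<phi> (f $ n)"
  by (simp add: fps_map_def)

lemma map_ps2_nth [simp]: "map_ps2 \<phi> F $ i $ j = \<phi> (F $ i $ j)"
  by (simp add: map_ps2_def)

context comm_ring_hom
begin

lemma map_zero [simp]: "\<phi> 0 = 0"
  using map_add[of 0 0] by simp

lemma map_sum: "\<phi> (sum f A) = (\<Sum>x\<in>A. \<phi> (f x))"
  by (induction A rule: infinite_finite_induct) (auto simp: map_add)

lemma fps_map_zero: "fps_map \<phi> 0 = 0"
  by (simp add: fps_eq_iff)

lemma fps_map_one: "fps_map \<phi> 1 = 1"
  by (simp add: fps_eq_iff map_one)

lemma fps_map_mult: "fps_map \<phi> (f * g) = fps_map \<phi> f * fps_map \<phi> g"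
  by (simp add: fps_eq_iff fps_mult_nth map_sum map_mult)

lemma fps_map_power: "fps_map \<phi> (f ^ k) = fps_map \<phi> f ^ k"
  by (induction k) (simp_all add: fps_map_one fps_map_mult)

end

lemma is_rationalization_comm_ring_hom: "is_rationalization \<phi> \<Longrightarrow> comm_ring_hom \<phi>"
  unfolding is_rationalization_def comm_ring_hom_def by auto

lemma is_rationalization_eq_0_iff:
  assumes "is_rationalization \<phi>"
  shows "\<phi> a = 0 \<longleftrightarrow> a = 0"
proof -
  interpret comm_ring_hom \<phi> using assms by (rule is_rationalization_comm_ring_hom)
  show ?thesis using assms unfolding is_rationalization_def by (metis map_zero injD)
qed

lemma is_rationalization_torsion_free:
  assumes "is_rationalization (\<phi> :: 'a::comm_ring_1 \<Rightarrow> 'b::comm_ring_1)"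
  shows "torsion_free TYPE('b)"
  unfolding torsion_free_def
proof (intro allI impI)
  fix m :: nat and b :: 'b
  assume "m \<noteq> 0" "of_nat m * b = 0"
  moreover obtain u :: 'b where "of_nat m * u = 1"
    using assms \<open>m \<noteq> 0\<close> unfolding is_rationalization_def by blast
  ultimately show "b = 0"
    by (metis mult.assoc mult.commute mult_1 mult_zero_right)
qed

lemma torsion_freeD:
  "torsion_free TYPE('a::comm_ring_1) \<Longrightarrow> m \<noteq> 0 \<Longrightarrow> of_nat m * a = 0 \<Longrightarrow> (a::'a) = 0"
  unfolding torsion_free_def by blast

section \<open>Substitution into a bivariate power series\<close>

(* P(g(x), x): the outer variable of P is replaced by g, the inner one by x. *)
definition fps2_subst :: "'a::comm_ring_1 fps \<Rightarrow> 'a fps fps \<Rightarrow> 'a fps" where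
  "fps2_subst g P = Abs_fps (\<lambda>m. \<Sum>i\<le>m. (P $ i * g ^ i) $ m)"

lemma fps2_subst_nth: "fps2_subst g P $ m = (\<Sum>i\<le>m. \<Sum>j\<le>m. P $ i $ j * (g ^ i) $ (m - j))"
  by (simp add: fps2_subst_def fps_mult_nth atLeast0AtMost)

lemma fps2_subst_nth_0: "fps2_subst g P $ 0 = P $ 0 $ 0"
  by (simp add: fps2_subst_nth)

lemma fps_mult_power_nth_eq_0:
  assumes "g $ 0 = 0" "m < i"
  shows "(h * g ^ i) $ m = 0"
  using assms startsby_zero_power_prefix[of g i]
  by (auto simp: fps_mult_nth intro!: sum.neutral)

lemma fps2_subst_nth_eq_partial_sum:
  assumes g0: "g $ 0 = 0" and "m \<le> N"
  shows "fps2_subst g P $ m = (\<Sum>i\<le>N. P $ i * g ^ i) $ m"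
proof -
  have "fps2_subst g P $ m = (\<Sum>i\<le>N. (P $ i * g ^ i) $ m)"
    unfolding fps2_subst_def using \<open>m \<le> N\<close>
    by (simp, intro sum.mono_neutral_left) (auto simp: fps_mult_power_nth_eq_0[OF g0])
  then show ?thesis by (simp add: fps_sum_nth)
qed

lemma fps2_subst_mult:
  assumes g0: "g $ 0 = 0"
  shows "fps2_subst g (P * Q) = fps2_subst g P * fps2_subst g Q"
proof (rule fps_ext)
  fix m
  define h where "h i j = (P $ i * Q $ j) * g ^ (i + j)" for i j
  have trunc: "fps2_subst g R $ s = (\<Sum>i\<le>m. R $ i * g ^ i) $ s" if "s \<le> m" for R s
    using fps2_subst_nth_eq_partial_sum[OF g0 that] .
  have "(fps2_subst g P * fps2_subst g Q) $ m
      = ((\<Sum>i\<le>m. P $ i * g ^ i) * (\<Sum>j\<le>m. Q $ j * g ^ j)) $ m"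
    by (simp add: fps_mult_nth trunc)
  also have "\<dots> = (\<Sum>(i, j)\<in>{..m} \<times> {..m}. h i j) $ m"
    by (simp add: h_def sum_product sum.cartesian_product power_add mult_ac)
  also have "\<dots> = (\<Sum>(i, j)\<in>{(i, j). i + j \<le> m}. h i j) $ m"
    unfolding fps_sum_nth
    by (rule sum.mono_neutral_right)
      (auto simp: h_def, metis fps_mult_power_nth_eq_0[OF g0] not_le)
  also have "\<dots> = (\<Sum>k\<le>m. \<Sum>i\<le>k. h i (k - i)) $ m"
    by (simp only: sum.triangle_reindex_eq)
  also have "\<dots> = (\<Sum>k\<le>m. (P * Q) $ k * g ^ k) $ m"
    by (simp add: h_def fps_mult_nth atLeast0AtMost sum_distrib_right)
  also have "\<dots> = fps2_subst g (P * Q) $ m"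
    by (simp add: trunc)
  finally show "fps2_subst g (P * Q) $ m = (fps2_subst g P * fps2_subst g Q) $ m" ..
qed

lemma fps2_subst_one: "fps2_subst g 1 = 1"
  by (rule fps_ext) (simp add: fps2_subst_def fps_one_nth atMost_atLeast0 sum.atLeast_Suc_atMost)

lemma fps2_subst_power: "g $ 0 = 0 \<Longrightarrow> fps2_subst g (P ^ k) = fps2_subst g P ^ k"
  by (induction k) (simp_all add: fps2_subst_one fps2_subst_mult)

lemma fps2_power_nth_eq_0:
  assumes "P $ 0 $ 0 = 0" "i + j < k"
  shows "(P ^ k) $ i $ j = 0"
  using assms(2)
proof (induction k arbitrary: i j)
  case (Suc k)
  have "P $ a $ b * (P ^ k) $ (i - a) $ (j - b) = 0" if "a \<le> i" "b \<le> j" for a b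
    using assms(1) Suc that by (cases "a = 0 \<and> b = 0") auto
  then show ?case
    by (simp add: fps_mult_nth fps_sum_nth)
qed simp

lemma fps_compose_fps2_subst_additive:
  fixes G :: "'a::comm_ring_1 fps fps" and l g :: "'a fps"
  assumes G00: "G $ 0 $ 0 = 0" and g0: "g $ 0 = 0"
    and additive: "\<And>i j. (\<Sum>k\<le>i+j. l $ k * (G ^ k) $ i $ j)
                    = (if j = 0 then l $ i else 0) + (if i = 0 then l $ j else 0)"
  shows "l oo fps2_subst g G = (l oo g) + l"
proof (rule fps_ext)
  fix m
  define R where "R i j = (if j = 0 then l $ i else 0) + (if i = 0 then l $ j else 0)" for i j
  have coeff: "(g ^ i) $ (m - j) * (\<Sum>k\<le>m. l $ k * (G ^ k) $ i $ j) = (g ^ i) $ (m - j) * R i j"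
    if "j \<le> m" for i j
  proof (cases "i + j \<le> m")
    case True
    then have "(\<Sum>k\<le>m. l $ k * (G ^ k) $ i $ j) = (\<Sum>k\<le>i+j. l $ k * (G ^ k) $ i $ j)"
      by (intro sum.mono_neutral_right) (auto simp: fps2_power_nth_eq_0[OF G00])
    then show ?thesis using additive R_def by simp
  next
    case False
    then show ?thesis using that startsby_zero_power_prefix[OF g0, of i] by simp
  qed
  have "(l oo fps2_subst g G) $ m
      = (\<Sum>k\<le>m. l $ k * (\<Sum>i\<le>m. \<Sum>j\<le>m. (G ^ k) $ i $ j * (g ^ i) $ (m - j)))"
    by (simp add: fps_compose_nth atLeast0AtMost fps2_subst_power[OF g0, symmetric] fps2_subst_nth)
  also have "\<dots> = (\<Sum>i\<le>m. \<Sum>j\<le>m. (g ^ i) $ (m - j) * (\<Sum>k\<le>m. l $ k * (G ^ k) $ i $ j))"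
    unfolding sum_distrib_left
    by (rule trans[OF sum.swap sum.cong[OF refl trans[OF sum.swap]]]) (simp add: mult_ac)
  also have "\<dots> = (\<Sum>i\<le>m. \<Sum>j\<le>m. (g ^ i) $ (m - j) * R i j)"
    by (intro sum.cong refl coeff) simp
  also have "\<dots> = (\<Sum>i\<le>m. l $ i * (g ^ i) $ m) + l $ m"
  proof -
    have "(\<Sum>j\<le>m. (g ^ i) $ (m - j) * (if j = 0 then l $ i else 0)) = l $ i * (g ^ i) $ m" for i
      by (simp add: if_distrib[where f="\<lambda>x. _ * x"] sum.delta mult.commute cong: if_cong)
    moreover have "(\<Sum>j\<le>m. (g ^ i) $ (m - j) * (if i = 0 then l $ j else 0))
        = (if i = 0 then l $ m else 0)" for i
      by (cases "i = 0")
        (simp_all add: fps_one_nth if_distrib[where f="\<lambda>x. x * _"] sum.delta' cong: if_cong)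
    ultimately show ?thesis
      by (simp add: R_def distrib_left sum.distrib sum.delta)
  qed
  finally show "(l oo fps2_subst g G) $ m = ((l oo g) + l) $ m"
    by (simp add: fps_compose_nth atLeast0AtMost)
qed

section \<open>Power series supported in a residue class\<close>

definition fps_cong_supp :: "nat \<Rightarrow> nat \<Rightarrow> 'a::zero fps \<Rightarrow> bool" where
  "fps_cong_supp d c f \<longleftrightarrow> (\<forall>i. f $ i \<noteq> 0 \<longrightarrow> i mod d = c mod d)"

lemma fps_cong_supp_mult:
  fixes f g :: "'a::semiring_1 fps"
  assumes "fps_cong_supp d a f" "fps_cong_supp d b g"
  shows "fps_cong_supp d (a + b) (f * g)"
  unfolding fps_cong_supp_def
proof (intro allI impI)
  fix i assume "(f * g) $ i \<noteq> 0"
  then obtain j where j: "j \<le> i" "f $ j \<noteq> 0" "g $ (i - j) \<noteq> 0"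
    unfolding fps_mult_nth by (metis (no_types, lifting) atLeastAtMost_iff mult_not_zero sum.neutral)
  then have "j mod d = a mod d" "(i - j) mod d = b mod d"
    using assms by (auto simp: fps_cong_supp_def)
  then have "(j + (i - j)) mod d = (a + b) mod d" by (metis mod_add_cong)
  then show "i mod d = (a + b) mod d" using j by simp
qed

lemma fps_cong_supp_power:
  fixes f :: "'a::semiring_1 fps"
  shows "fps_cong_supp d 1 f \<Longrightarrow> fps_cong_supp d k (f ^ k)"
proof (induction k)
  case 0
  show ?case by (simp add: fps_cong_supp_def fps_one_nth)
next
  case (Suc k)
  then show ?case using fps_cong_supp_mult[of d 1 f k "f ^ k"] by simp
qed

lemma gradable_iff_fps_cong_supp:
  assumes "f $ 0 = 0"
  shows "gradable q f \<longleftrightarrow> fps_cong_supp (q - 1) 1 f"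
proof -
  have "(\<exists>j. k = 1 + j * (q - 1)) \<longleftrightarrow> k mod (q - 1) = 1 mod (q - 1)" if "k \<noteq> 0" for k
  proof -
    have "k mod (q - 1) = 1 mod (q - 1) \<longleftrightarrow> (q - 1) dvd (k - 1)"
      by (rule mod_eq_dvd_iff_nat) (use that in simp)
    also have "\<dots> \<longleftrightarrow> (\<exists>j. k = 1 + j * (q - 1))"
      using that by (auto simp: dvd_def mult.commute intro!: exI[where x="(k - 1) div (q - 1)"])
    finally show ?thesis ..
  qed
  then show ?thesis
    using assms unfolding gradable_def fps_cong_supp_def by metis
qed

lemma fps_cong_supp_fps_map_iff:
  "(\<And>a. \<phi> a = 0 \<longleftrightarrow> a = 0) \<Longrightarrow> fps_cong_supp d c (fps_map \<phi> f) \<longleftrightarrow> fps_cong_supp d c f"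
  by (simp add: fps_cong_supp_def)

section \<open>Schroeder's equation\<close>

lemma fps_power_nth_cutoff:
  fixes f :: "'a::comm_ring_1 fps"
  assumes f0: "f $ 0 = 0" and k: "2 \<le> k"
  shows "(f ^ k) $ m = (fps_cutoff m f ^ k) $ m"
proof -
  define t where "t = fps_cutoff m f"
  define S where "S = (\<Sum>i<k. t ^ (k - Suc i) * f ^ i)"
  have "S $ 0 = 0"
    unfolding S_def fps_sum_nth
  proof (intro sum.neutral ballI)
    fix i assume "i \<in> {..<k}"
    then have "0 < k - Suc i \<or> 0 < i" using k by auto
    then show "(t ^ (k - Suc i) * f ^ i) $ 0 = 0"
      using f0 by (auto simp: t_def startsby_zero_power)
  qed
  then have "((f - t) * S) $ m = 0"
    unfolding fps_mult_nth by (intro sum.neutral ballI) (auto simp: t_def)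
  moreover have "f ^ k - t ^ k = (f - t) * S"
    unfolding S_def by (rule power_diff_sumr2)
  ultimately show ?thesis
    by (metis fps_sub_nth right_minus_eq t_def)
qed

lemma fps_compose_nth_split:
  assumes "M $ 0 = 0"
  shows "(L oo M) $ m = (\<Sum>k<m. L $ k * (M ^ k) $ m) + L $ m * (M $ 1) ^ m"
  using assms by (simp add: fps_compose_nth atLeast0AtMost lessThan_Suc_atMost[symmetric]
      startsby_zero_power_nth_same)

lemma schroeder_solution_coeff:
  fixes L M :: "'a::comm_ring_1 fps"
  assumes M0: "M $ 0 = 0" and M1: "M $ 1 = of_nat p"
    and schroeder: "L oo M = fps_const (of_nat p) * L" and "1 \<le> m"
  shows "of_nat (p ^ m - p) * L $ m = - (\<Sum>k<m. L $ k * (M ^ k) $ m)"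
proof -
  have "p \<le> p ^ m"
    using \<open>1 \<le> m\<close> by (cases "p = 0") (simp_all add: self_le_power)
  moreover have "(\<Sum>k<m. L $ k * (M ^ k) $ m) + L $ m * of_nat (p ^ m) = of_nat p * L $ m"
    using fps_compose_nth_split[OF M0, of L m] schroeder M1 by (simp del: One_nat_def)
  ultimately show ?thesis
    by (simp add: of_nat_diff algebra_simps eq_neg_iff_add_eq_0)
qed

lemma schroeder_solution_unique:
  fixes L L' M :: "'a::comm_ring_1 fps"
  assumes tf: "torsion_free TYPE('a)" and p: "2 \<le> p"
    and M0: "M $ 0 = 0" and M1: "M $ 1 = of_nat p"
    and L: "L oo M = fps_const (of_nat p) * L" and L': "L' oo M = fps_const (of_nat p) * L'"
    and "L $ 0 = L' $ 0" "L $ 1 = L' $ 1"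
  shows "L = L'"
proof (rule fps_ext)
  fix m
  show "L $ m = L' $ m"
  proof (induction m rule: less_induct)
    case (less m)
    show ?case
    proof (cases "m \<le> 1")
      case True
      then show ?thesis using assms(7,8) by (cases m) auto
    next
      case False
      have "p ^ 1 < p ^ m" using p False by (intro power_strict_increasing) auto
      then have "p ^ m - p \<noteq> 0" by simp
      moreover have "of_nat (p ^ m - p) * (L $ m - L' $ m) = 0"
        using schroeder_solution_coeff[OF M0 M1 L, of m] schroeder_solution_coeff[OF M0 M1 L', of m] less.IH False
        by (simp add: right_diff_distrib)
      ultimately have "L $ m - L' $ m = 0" by (rule torsion_freeD[OF tf])
      then show ?thesis by simp
    qed
  qed
qed

lemma schroeder_solution_cong_supp:
  fixes L M :: "'a::comm_ring_1 fps"
  assumes tf: "torsion_free TYPE('a)" and p: "2 \<le> p"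
    and M0: "M $ 0 = 0" and M1: "M $ 1 = of_nat p"
    and schroeder: "L oo M = fps_const (of_nat p) * L" and L0: "L $ 0 = 0"
    and M_supp: "fps_cong_supp d 1 M"
  shows "fps_cong_supp d 1 L"
  unfolding fps_cong_supp_def
proof (intro allI)
  fix m
  show "L $ m \<noteq> 0 \<longrightarrow> m mod d = 1 mod d"
  proof (induction m rule: less_induct)
    case (less m)
    show ?case
    proof (rule impI, rule ccontr)
      assume Lm: "L $ m \<noteq> 0" and m_class: "m mod d \<noteq> 1 mod d"
      have "m \<noteq> 0" using Lm L0 by metis
      moreover have "m \<noteq> 1" using m_class by auto
      ultimately have "2 \<le> m" by simp
      have vanish: "L $ k * (M ^ k) $ m = 0" if "k < m" for k
      proof (cases "L $ k = 0")
        case False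
        then have "k mod d = 1 mod d" using less.IH[OF that] by blast
        then have "(M ^ k) $ m = 0"
          using fps_cong_supp_power[OF M_supp, of k] m_class unfolding fps_cong_supp_def by metis
        then show ?thesis by simp
      qed simp
      have "p ^ 1 < p ^ m" using p \<open>2 \<le> m\<close> by (intro power_strict_increasing) auto
      then have "p ^ m - p \<noteq> 0" by simp
      moreover have "of_nat (p ^ m - p) * L $ m = 0"
        using schroeder_solution_coeff[OF M0 M1 schroeder, of m] \<open>2 \<le> m\<close> vanish by simp
      ultimately have "L $ m = 0" by (rule torsion_freeD[OF tf])
      then show False using Lm by contradiction
    qed
  qed
qed

lemma schroeder_series_cong_supp:
  fixes L M :: "'a::comm_ring_1 fps"
  assumes M0: "M $ 0 = 0" and schroeder: "L oo M = fps_const c * L"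
    and L0: "L $ 0 = 0" and L1: "L $ 1 = 1" and L_supp: "fps_cong_supp d 1 L"
  shows "fps_cong_supp d 1 M"
  unfolding fps_cong_supp_def
proof (intro allI)
  fix m
  show "M $ m \<noteq> 0 \<longrightarrow> m mod d = 1 mod d"
  proof (induction m rule: less_induct)
    case (less m)
    show ?case
    proof (rule impI, rule ccontr)
      assume Mm: "M $ m \<noteq> 0" and m_class: "m mod d \<noteq> 1 mod d"
      have "fps_cong_supp d 1 (fps_cutoff m M)"
        using less.IH by (simp add: fps_cong_supp_def)
      have summand: "L $ k * (M ^ k) $ m = (if k = 1 then M $ m else 0)" for k
      proof (cases "2 \<le> k \<and> L $ k \<noteq> 0")
        case True
        then have "k mod d = 1 mod d" using L_supp by (simp add: fps_cong_supp_def)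
        moreover have "(M ^ k) $ m = (fps_cutoff m M ^ k) $ m"
          using True by (intro fps_power_nth_cutoff[OF M0]) simp
        ultimately have "(M ^ k) $ m = 0"
          using fps_cong_supp_power[OF \<open>fps_cong_supp d 1 (fps_cutoff m M)\<close>, of k] m_class
          unfolding fps_cong_supp_def by metis
        then show ?thesis using True by simp
      next
        case False
        then consider "k = 0" | "k = 1" | "L $ k = 0" by linarith
        then show ?thesis using L0 L1 False by cases auto
      qed
      have "L $ m = 0" using L_supp m_class by (auto simp: fps_cong_supp_def)
      then have "(L oo M) $ m = 0" by (simp add: schroeder)
      moreover have "(L oo M) $ m = M $ m"
      proof -
        have "m \<noteq> 0" using Mm M0 by metis
        then show ?thesis by (simp only: fps_compose_nth summand) (simp add: sum.delta)
      qed
      ultimately show False using Mm by simp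
    qed
  qed
qed
section \<open>Powers of p modulo p^n - 1\<close>

lemma power_mod_pred_power_eq_1_iff:
  fixes p n i :: nat
  assumes p: "2 \<le> p" and n: "1 \<le> n"
  shows "p ^ i mod (p ^ n - 1) = 1 mod (p ^ n - 1) \<longleftrightarrow> n dvd i"
proof -
  define d where "d = p ^ n - 1"
  have "p ^ n = d + 1"
    using p by (simp add: d_def)
  then have "(p ^ n) ^ k mod d = 1 mod d" for k
    by (metis add.commute mod_add_self1 power_mod power_one)
  then have "((p ^ n) ^ (i div n) * p ^ (i mod n)) mod d = p ^ (i mod n) mod d"
    by (metis mod_mult_left_eq mult_1)
  then have reduce: "p ^ i mod d = p ^ (i mod n) mod d"
    by (metis div_mult_mod_eq power_add power_mult mult.commute)
  show ?thesis
  proof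
    assume "p ^ i mod (p ^ n - 1) = 1 mod (p ^ n - 1)"
    then have r: "p ^ (i mod n) mod d = 1 mod d" using reduce by (simp add: d_def)
    show "n dvd i"
    proof (cases "n = 1")
      case False
      define q where "q = p ^ (n - 1)"
      have "p ^ 1 \<le> q" unfolding q_def using p n False by (intro power_increasing) auto
      moreover have "p * q = p ^ n" using n by (simp add: q_def flip: power_Suc)
      moreover have "2 * q \<le> p * q" using p by (rule mult_le_mono1)
      ultimately have "q < d" "1 < d" using p by (auto simp: d_def)
      moreover have "i mod n \<le> n - 1" using mod_less_divisor[of n i] n by linarith
      then have "p ^ (i mod n) \<le> q"
        unfolding q_def using p by (intro power_increasing) auto
      ultimately have "p ^ (i mod n) = 1" using r by simp
      then show ?thesis using p by (simp add: dvd_eq_mod_eq_0)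
    qed simp
  qed (metis reduce d_def dvd_eq_mod_eq_0 power_0)
qed

lemma ex_power_mult_eq_iff:
  fixes p n k :: nat
  assumes "2 \<le> p" "1 \<le> n"
  shows "(\<exists>i. k = p ^ (n * i)) \<longleftrightarrow> (\<exists>i. k = p ^ i) \<and> k mod (p ^ n - 1) = 1 mod (p ^ n - 1)"
proof
  assume "\<exists>i. k = p ^ (n * i)"
  then show "(\<exists>i. k = p ^ i) \<and> k mod (p ^ n - 1) = 1 mod (p ^ n - 1)"
    using power_mod_pred_power_eq_1_iff[OF assms] by auto
next
  assume "(\<exists>i. k = p ^ i) \<and> k mod (p ^ n - 1) = 1 mod (p ^ n - 1)"
  then obtain i where "k = p ^ i" "n dvd i"
    using power_mod_pred_power_eq_1_iff[OF assms] by blast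
  then show "\<exists>i. k = p ^ (n * i)" by (auto elim!: dvdE)
qed

lemma (in comm_ring_hom) fps_map_fgl_add_X:
  "fps_map \<phi> (fgl_add F g fps_X) = fps2_subst (fps_map \<phi> g) (map_ps2 \<phi> F)"
proof (rule fps_ext)
  fix m
  have "fps_map \<phi> (fgl_add F g fps_X) $ m
      = (\<Sum>i\<le>m. \<Sum>j\<le>m. \<phi> (F $ i $ j) * \<phi> ((g ^ i * fps_X ^ j) $ m))"
    by (simp add: fgl_add_def c2_def map_sum map_mult)
  also have "\<dots> = (\<Sum>i\<le>m. \<Sum>j\<le>m. \<phi> (F $ i $ j) * (fps_map \<phi> g ^ i) $ (m - j))"
    by (intro sum.cong refl) (simp add: fps_X_power_mult_right_nth fps_map_power[symmetric])
  finally show "fps_map \<phi> (fgl_add F g fps_X) $ m = fps2_subst (fps_map \<phi> g) (map_ps2 \<phi> F) $ m"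
    by (simp add: fps2_subst_nth)
qed

lemma fgl_log_nth_0: "fgl_log \<phi> F l \<Longrightarrow> l $ 0 = 0"
  and fgl_log_nth_1: "fgl_log \<phi> F l \<Longrightarrow> l $ 1 = 1"
  by (simp_all add: fgl_log_def)

lemma (in comm_ring_hom) fgl_log_fgl_mult:
  assumes F00: "F $ 0 $ 0 = 0" and log: "fgl_log \<phi> F l"
  shows "fps_map \<phi> (fgl_mult F k) $ 0 = 0 \<and>
    l oo fps_map \<phi> (fgl_mult F k) = fps_const (of_nat k) * l"
proof (induction k)
  case 0
  show ?case using fgl_log_nth_0[OF log] by (simp add: fps_map_zero)
next
  case (Suc k)
  let ?G = "map_ps2 \<phi> F"
  have G00: "?G $ 0 $ 0 = 0" using F00 by simp
  have additive: "(\<Sum>k\<le>i+j. l $ k * (?G ^ k) $ i $ j)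
      = (if j = 0 then l $ i else 0) + (if i = 0 then l $ j else 0)" for i j
    using log by (simp add: fgl_log_def c2_def)
  have step: "fps_map \<phi> (fgl_mult F (Suc k)) = fps2_subst (fps_map \<phi> (fgl_mult F k)) ?G"
    by (simp add: fps_map_fgl_add_X)
  show ?case
    unfolding step using Suc.IH fps_compose_fps2_subst_additive[OF G00 _ additive]
    by (simp add: fps2_subst_nth_0 F00 algebra_simps fps_const_add[symmetric])
qed

lemma (in comm_ring_hom) fgl_mult_nth_1:
  assumes "F $ 0 $ 0 = 0" "fgl_log \<phi> F l"
  shows "fps_map \<phi> (fgl_mult F k) $ 1 = of_nat k"
proof -
  let ?M = "fps_map \<phi> (fgl_mult F k)"
  have "?M $ 0 = 0" and "l oo ?M = fps_const (of_nat k) * l"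
    using fgl_log_fgl_mult[OF assms] by auto
  then show ?thesis
    using fps_compose_nth_split[of ?M l 1] fgl_log_nth_0[OF assms(2)] fgl_log_nth_1[OF assms(2)]
    by simp
qed

lemma (in comm_ring_hom) fgl_log_unique:
  assumes tf: "torsion_free TYPE('b)" and F00: "F $ 0 $ 0 = 0"
    and log: "fgl_log \<phi> F l" and log': "fgl_log \<phi> F l'"
  shows "l = l'"
  (* both logarithms solve Schroeder's equation for [2]_F *)
proof (rule schroeder_solution_unique[OF tf order.refl])
  let ?M = "fps_map \<phi> (fgl_mult F 2)"
  show "?M $ 0 = 0" "l oo ?M = fps_const (of_nat 2) * l" "l' oo ?M = fps_const (of_nat 2) * l'"
    using fgl_log_fgl_mult[OF F00 log] fgl_log_fgl_mult[OF F00 log'] by auto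
  show "?M $ 1 = of_nat 2"
    by (rule fgl_mult_nth_1[OF F00 log])
  show "l $ 0 = l' $ 0" "l $ 1 = l' $ 1"
    using log log' by (simp_all add: fgl_log_def)
qed

lemma (in comm_ring_hom) p_typical_iff:
  assumes "torsion_free TYPE('b)" "F $ 0 $ 0 = 0" "fgl_log \<phi> F l"
  shows "p_typical p \<phi> F \<longleftrightarrow> (\<forall>k. l $ k \<noteq> 0 \<longrightarrow> (\<exists>i. k = p ^ i))"
  using fgl_log_unique[OF assms] assms(3) unfolding p_typical_def by blast

theorem corollary3p1p6:
  fixes p n :: nat
    and F :: "'a::comm_ring_1 fps fps"
    and \<phi> :: "'a \<Rightarrow> 'b::comm_ring_1"
    and l :: "'b fps"
  assumes "prime p" and "n \<ge> 1"
    and "Zp_algebra p TYPE('a)"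
    and "torsion_free TYPE('a)"
    and "is_rationalization \<phi>"
    and "formal_group_law F"
    and "fgl_log \<phi> F l"
  shows "pn_typical p n \<phi> F \<longleftrightarrow> (\<forall>k. fps_nth l k \<noteq> 0 \<longrightarrow> (\<exists>i. k = p ^ (n * i)))"
proof -
  interpret comm_ring_hom \<phi> using assms(5) by (rule is_rationalization_comm_ring_hom)
  have p: "2 \<le> p" using assms(1) by (rule prime_ge_2_nat)
  have tf: "torsion_free TYPE('b)" using assms(5) by (rule is_rationalization_torsion_free)
  have F00: "F $ 0 $ 0 = 0" using assms(6) by (simp add: formal_group_law_def c2_def)
  have inj: "\<phi> a = 0 \<longleftrightarrow> a = 0" for a using assms(5) by (rule is_rationalization_eq_0_iff)
  define M where "M = fps_map \<phi> (fgl_mult F p)"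
  have M0: "M $ 0 = 0" and schroeder: "l oo M = fps_const (of_nat p) * l"
    using fgl_log_fgl_mult[OF F00 assms(7)] by (auto simp: M_def)
  have M1: "M $ 1 = of_nat p" unfolding M_def by (rule fgl_mult_nth_1[OF F00 assms(7)])
  have l0: "l $ 0 = 0" and l1: "l $ 1 = 1"
    using fgl_log_nth_0[OF assms(7)] fgl_log_nth_1[OF assms(7)] .
  have "gradable (p ^ n) (fgl_mult F p) \<longleftrightarrow> fps_cong_supp (p ^ n - 1) 1 M"
    using M0 inj by (simp add: M_def gradable_iff_fps_cong_supp fps_cong_supp_fps_map_iff)
  also have "\<dots> \<longleftrightarrow> fps_cong_supp (p ^ n - 1) 1 l"
    using schroeder_solution_cong_supp[OF tf p M0 M1 schroeder l0]
      schroeder_series_cong_supp[OF M0 schroeder l0 l1] by blast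
  finally show ?thesis
    using p_typical_iff[OF tf F00 assms(7)] ex_power_mult_eq_iff[OF p assms(2)]
    unfolding pn_typical_def fps_cong_supp_def by blast
qed

end
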